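(* Let $\Delta>0$, $\nu>0$, $R\in\mathbb{R}$ with $\Delta^2-4\Delta\nu(1+\Delta R)<0$ (so that $p_\pm^2$ are non-real complex conjugates and all eigenvalues $\lambda^{\rm o}_k,\lambda^{\rm e}_k$ are nonzero). Let $p_+$ be a square root of $p_+^2$. Then for all $x,y\in[-1,1]$, $$\sum_{k=1}^{\infty}\left\{\frac{w^{\rm o}_k(x)w^{\rm o}_k(y)}{\lambda^{\rm o}_k}+\frac{w^{\rm e}_k(x)w^{\rm e}_k(y)}{\lambda^{\rm e}_k}\right\} =\frac{1}{\Delta\nu\,\Im(p_+^2-p_-^2)}\,\Im\!\left(\frac{-\cos\big(2p_+-p_+|x-y|\big)+\cos\big(p_+(x+y)\big)}{p_+\sin(2p_+)}\right)=:G(x,y),$$ and $G$ is the Green's function of the boundary value problem $\mathcal{L}v=r$, $v(-1)=v(1)=v_{xx}(-1)=v_{xx}(1)=0$, i.e. for every continuous $r$ on $[-1,1]$ the function $v(x)=\int_{-1}^{1}G(x,y)r(y)\,dy$ is its solution.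
   Context: $\mathcal{L}=1+\Delta R+\Delta\,\partial_{xx}+\Delta\nu\,\partial_{xxxx}$ on $[-1,1]$. $w^{\rm o}_k(x)=\sin(k\pi x)$, $w^{\rm e}_k(x)=\cos((k-\tfrac12)\pi x)$, $\lambda^{\rm o}_k=1+\Delta R-\Delta\pi^2k^2+\Delta\nu\pi^4k^4$, $\lambda^{\rm e}_k=1+\Delta R-\Delta\pi^2(k-\tfrac12)^2+\Delta\nu\pi^4(k-\tfrac12)^4$ for $k\ge1$. $p_\pm^2=\frac{1}{2\nu}\pm\frac{1}{2\Delta\nu}\sqrt{\Delta^2-4\Delta\nu(1+\Delta R)}$, where the square root of the negative discriminant is $i\sqrt{4\Delta\nu(1+\Delta R)-\Delta^2}$. *)

theory Defs
  imports "HOL-Analysis.Analysis"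
begin

text \<open>Eigenfunctions and eigenvalues of
  L = 1 + Delta R + Delta d_xx + Delta nu d_xxxx on [-1,1], for k \<ge> 1.\<close>

definition w_o :: "nat \<Rightarrow> real \<Rightarrow> real" where
  "w_o k x = sin (real k * pi * x)"

definition w_e :: "nat \<Rightarrow> real \<Rightarrow> real" where
  "w_e k x = cos ((real k - 1/2) * pi * x)"

definition lam_o :: "real \<Rightarrow> real \<Rightarrow> real \<Rightarrow> nat \<Rightarrow> real" where
  "lam_o \<Delta> \<nu> R k = 1 + \<Delta> * R - \<Delta> * pi^2 * (real k)^2 + \<Delta> * \<nu> * pi^4 * (real k)^4"

definition lam_e :: "real \<Rightarrow> real \<Rightarrow> real \<Rightarrow> nat \<Rightarrow> real" where
  "lam_e \<Delta> \<nu> R k = 1 + \<Delta> * R - \<Delta> * pi^2 * (real k - 1/2)^2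
                      + \<Delta> * \<nu> * pi^4 * (real k - 1/2)^4"

definition psq_plus :: "real \<Rightarrow> real \<Rightarrow> real \<Rightarrow> complex" where
  "psq_plus \<Delta> \<nu> R = complex_of_real (1 / (2 * \<nu>))
     + \<i> * complex_of_real (sqrt (4 * \<Delta> * \<nu> * (1 + \<Delta> * R) - \<Delta>^2) / (2 * \<Delta> * \<nu>))"

definition psq_minus :: "real \<Rightarrow> real \<Rightarrow> real \<Rightarrow> complex" where
  "psq_minus \<Delta> \<nu> R = complex_of_real (1 / (2 * \<nu>))
     - \<i> * complex_of_real (sqrt (4 * \<Delta> * \<nu> * (1 + \<Delta> * R) - \<Delta>^2) / (2 * \<Delta> * \<nu>))"

text \<open>The closed-form Green's function, with p a chosen square root of p_plus^2.\<close>

definition Green :: "real \<Rightarrow> real \<Rightarrow> real \<Rightarrow> complex \<Rightarrow> real \<Rightarrow> real \<Rightarrow> real" where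
  "Green \<Delta> \<nu> R p x y =
     1 / (\<Delta> * \<nu> * Im (psq_plus \<Delta> \<nu> R - psq_minus \<Delta> \<nu> R)) *
     Im ((- cos (2 * p - p * complex_of_real \<bar>x - y\<bar>) + cos (p * complex_of_real (x + y)))
         / (p * sin (2 * p)))"

end

(*
  Write G(x,y) = Im (c * sin (p (1 + min x y)) * sin (p (1 - max x y))) for a complex constant c.
  Both sine factors solve u'' + p^2 u = 0 and vanish at -1 and at 1 respectively, so variation of
  parameters writes v(x) = integral of G(x,y) r(y) dy as Im (c P) with P'' = - p^2 P + W r, where
  c W is real. Since p^2 is a root of the symbol 1 + Delta R - Delta z + Delta nu z^2, the fourth
  order equation for v follows, and the hinged boundary conditions come from P(-1) = P(1) = 0.

  The eigenfunctions are, up to sign, the sine modes sin (n pi (x + 1) / 2). Lagrange's identity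
  shows that the n-th sine coefficient of G(., y) is the n-th mode at y divided by the eigenvalue,
  which equals Delta nu |p^2 - (n pi / 2)^2|^2 and grows like n^4. Hence the series converges
  uniformly, and its sum is G because a continuous function orthogonal to all sine modes vanishes
  (Stone-Weierstrass in the variable cos (pi (x + 1) / 2)).
*)

theory Submission
  imports Defs
begin

section \<open>Complex sines and second order linear equations\<close>

lemma has_vector_derivative_sin_affine:
  "((\<lambda>t. sin (a * complex_of_real t + b)) has_vector_derivative a * cos (a * complex_of_real t + b))
     (at t within S)"
proof -
  have "((\<lambda>z. sin (a * z + b)) has_field_derivative cos (a * of_real t + b) * a) (at (of_real t))"
    by (auto intro!: derivative_eq_intros)
  from has_vector_derivative_real_field[OF this] show ?thesis
    by (simp add: mult.commute)
qed

lemma has_vector_derivative_cos_affine: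
  "((\<lambda>t. cos (a * complex_of_real t + b)) has_vector_derivative - a * sin (a * complex_of_real t + b))
     (at t within S)"
proof -
  have "((\<lambda>z. cos (a * z + b)) has_field_derivative - sin (a * of_real t + b) * a) (at (of_real t))"
    by (auto intro!: derivative_eq_intros)
  from has_vector_derivative_real_field[OF this] show ?thesis
    by (simp add: mult.commute)
qed

lemma has_vector_derivative_cos_affine_scaled:
  "((\<lambda>t. a * cos (a * complex_of_real t + b)) has_vector_derivative - (a^2) * sin (a * complex_of_real t + b))
     (at t within S)"
proof -
  have "((\<lambda>t. a * cos (a * complex_of_real t + b)) has_vector_derivative
      a * (- a * sin (a * complex_of_real t + b))) (at t within S)"
    by (intro has_vector_derivative_mult_right has_vector_derivative_cos_affine)
  then show ?thesis
    by (simp add: power2_eq_square mult.assoc)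
qed

lemma integral_Im_mult:
  fixes f :: "real \<Rightarrow> complex"
  assumes "f integrable_on S"
  shows "integral S (\<lambda>y. Im (c * f y)) = Im (c * integral S f)"
proof -
  have "bounded_linear (\<lambda>z. Im (c * z))"
    by (intro bounded_linear_compose[OF bounded_linear_Im] bounded_linear_mult_right)
  from integral_linear[OF assms this] show ?thesis
    by (simp add: o_def)
qed

lemma Im_mult_of_real: "Im (z * complex_of_real r) = Im z * r"
  by simp

lemma has_real_derivative_Im_mult:
  assumes "(f has_vector_derivative f') (at x within S)"
  shows "((\<lambda>x. Im (c * f x)) has_real_derivative Im (c * f')) (at x within S)"
proof -
  have "bounded_linear (\<lambda>z. Im (c * z))"
    by (intro bounded_linear_compose[OF bounded_linear_Im] bounded_linear_mult_right)
  from bounded_linear.has_vector_derivative[OF this assms] show ?thesis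
    by (simp add: has_real_derivative_iff_has_vector_derivative)
qed

lemma has_vector_derivative_integral_upper:
  fixes f :: "real \<Rightarrow> 'a::banach"
  assumes f: "continuous_on {a..b} f" and x: "x \<in> {a..b}"
  shows "((\<lambda>x. integral {x..b} f) has_vector_derivative - f x) (at x within {a..b})"
proof -
  have d: "((\<lambda>u. integral {a..b} f - integral {a..u} f) has_vector_derivative 0 - f x) (at x within {a..b})"
    by (intro derivative_intros integral_has_vector_derivative[OF f x])
  have eq: "integral {a..b} f - integral {a..u} f = integral {u..b} f" if "u \<in> {a..b}" for u
  proof -
    have "integral {a..u} f + integral {u..b} f = integral {a..b} f"
      using that by (intro Henstock_Kurzweil_Integration.integral_combine integrable_continuous_real f) auto
    then show ?thesis
      by (simp add: algebra_simps)
  qed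
  have "((\<lambda>u. integral {u..b} f) has_vector_derivative 0 - f x) (at x within {a..b})"
    by (rule has_vector_derivative_transform_within[OF d zero_less_one x]) (simp add: eq)
  then show ?thesis
    by simp
qed

lemma variation_of_parameters:
  fixes u w f :: "real \<Rightarrow> complex"
  assumes u: "\<And>t. (u has_vector_derivative u' t) (at t)" "\<And>t. (u' has_vector_derivative - q * u t) (at t)"
    and w: "\<And>t. (w has_vector_derivative w' t) (at t)" "\<And>t. (w' has_vector_derivative - q * w t) (at t)"
    and f: "continuous_on {a..b} f" and x: "x \<in> {a..b}"
  defines "A \<equiv> \<lambda>x. integral {a..x} (\<lambda>y. w y * f y)"
    and "B \<equiv> \<lambda>x. integral {x..b} (\<lambda>y. u y * f y)"
  shows "((\<lambda>x. u x * A x + w x * B x) has_vector_derivative u' x * A x + w' x * B x)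
           (at x within {a..b})"
    and "((\<lambda>x. u' x * A x + w' x * B x) has_vector_derivative
           - q * (u x * A x + w x * B x) + (u' x * w x - w' x * u x) * f x) (at x within {a..b})"
proof -
  have "continuous_on {a..b} u" "continuous_on {a..b} w"
    by (meson continuous_on_vector_derivative has_vector_derivative_at_within u(1) w(1))+
  then have wf: "continuous_on {a..b} (\<lambda>y. w y * f y)" and uf: "continuous_on {a..b} (\<lambda>y. u y * f y)"
    by (simp_all add: continuous_on_mult f)
  have A: "(A has_vector_derivative w x * f x) (at x within {a..b})"
    unfolding A_def by (rule integral_has_vector_derivative[OF wf x])
  have B: "(B has_vector_derivative - (u x * f x)) (at x within {a..b})"
    unfolding B_def by (rule has_vector_derivative_integral_upper[OF uf x])
  have "((\<lambda>x. u x * A x + w x * B x) has_vector_derivative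
          (u x * (w x * f x) + u' x * A x) + (w x * - (u x * f x) + w' x * B x)) (at x within {a..b})"
    by (intro has_vector_derivative_add has_vector_derivative_mult A B
        has_vector_derivative_at_within[OF u(1)] has_vector_derivative_at_within[OF w(1)])
  moreover have "(u x * (w x * f x) + u' x * A x) + (w x * - (u x * f x) + w' x * B x)
      = u' x * A x + w' x * B x"
    by (simp add: algebra_simps)
  ultimately show "((\<lambda>x. u x * A x + w x * B x) has_vector_derivative u' x * A x + w' x * B x)
      (at x within {a..b})"
    by simp
  have "((\<lambda>x. u' x * A x + w' x * B x) has_vector_derivative
          (u' x * (w x * f x) + - q * u x * A x) + (w' x * - (u x * f x) + - q * w x * B x))
          (at x within {a..b})"
    by (intro has_vector_derivative_add has_vector_derivative_mult A B
        has_vector_derivative_at_within[OF u(2)] has_vector_derivative_at_within[OF w(2)])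
  moreover have "(u' x * (w x * f x) + - q * u x * A x) + (w' x * - (u x * f x) + - q * w x * B x)
      = - q * (u x * A x + w x * B x) + (u' x * w x - w' x * u x) * f x"
    by (simp add: algebra_simps)
  ultimately show "((\<lambda>x. u' x * A x + w' x * B x) has_vector_derivative
      - q * (u x * A x + w x * B x) + (u' x * w x - w' x * u x) * f x) (at x within {a..b})"
    by simp
qed

lemma Lagrange_identity_has_integral:
  fixes u s :: "real \<Rightarrow> complex"
  assumes u: "\<And>t. (u has_vector_derivative u' t) (at t)" "\<And>t. (u' has_vector_derivative - q * u t) (at t)"
    and s: "\<And>t. (s has_vector_derivative s' t) (at t)" "\<And>t. (s' has_vector_derivative - k * s t) (at t)"
    and "q \<noteq> k" "a \<le> b"
  shows "((\<lambda>t. u t * s t) has_integral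
           ((u b * s' b - u' b * s b) - (u a * s' a - u' a * s a)) / (q - k)) {a..b}"
proof -
  have "((\<lambda>t. (u t * s' t - u' t * s t) / (q - k)) has_vector_derivative u t * s t) (at t within {a..b})"
    for t
  proof -
    have "((\<lambda>t. (u t * s' t - u' t * s t) / (q - k)) has_vector_derivative
            ((u t * (- k * s t) + u' t * s' t) - (u' t * s' t + - q * u t * s t)) / (q - k)) (at t)"
      by (intro derivative_intros has_vector_derivative_mult u s)
    moreover have "(u t * (- k * s t) + u' t * s' t) - (u' t * s' t + - q * u t * s t) = (q - k) * (u t * s t)"
      by (simp add: algebra_simps)
    ultimately show ?thesis
      using \<open>q \<noteq> k\<close> by (simp add: has_vector_derivative_at_within)
  qed
  from fundamental_theorem_of_calculus[OF \<open>a \<le> b\<close> this] show ?thesis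
    by (simp only: diff_divide_distrib)
qed

section \<open>Sine modes on [-1, 1]\<close>

definition interval_angle :: "real \<Rightarrow> real" where
  "interval_angle x = pi * (x + 1) / 2"

definition sine_mode :: "nat \<Rightarrow> real \<Rightarrow> real" where
  "sine_mode n x = sin (real n * interval_angle x)"

lemma interval_angle_bounds:
  assumes "x \<in> {-1..1}"
  shows "0 \<le> interval_angle x" "interval_angle x \<le> pi"
  using assms pi_gt_zero by (auto simp: interval_angle_def)

lemma interval_angle_strict_bounds:
  assumes "-1 < x" "x < 1"
  shows "0 < interval_angle x" "interval_angle x < pi"
  using assms pi_gt_zero by (auto simp: interval_angle_def)

lemma continuous_on_interval_angle [continuous_intros]: "continuous_on S interval_angle"
  unfolding interval_angle_def by (intro continuous_intros) auto

lemma continuous_on_sine_mode [continuous_intros]: "continuous_on S (sine_mode n)"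
  unfolding sine_mode_def by (intro continuous_intros)

lemma abs_sine_mode_le: "\<bar>sine_mode n x\<bar> \<le> 1"
  by (simp add: sine_mode_def)

lemma sine_mode_0 [simp]: "sine_mode 0 x = 0"
  by (simp add: sine_mode_def)

lemma sine_mode_boundary [simp]: "sine_mode n (-1) = 0" "sine_mode n 1 = 0"
  by (simp_all add: sine_mode_def interval_angle_def mult.commute)

lemma sine_mode_as_complex_sine:
  "complex_of_real (sine_mode n t)
     = sin (complex_of_real (real n * pi / 2) * complex_of_real t + complex_of_real (real n * pi / 2))"
proof -
  define \<omega> where "\<omega> = real n * pi / 2"
  have "real n * interval_angle t = \<omega> * t + \<omega>"
    by (simp add: \<omega>_def interval_angle_def algebra_simps add_divide_distrib)
  then have "complex_of_real (sine_mode n t) = sin (complex_of_real (\<omega> * t + \<omega>))"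
    by (simp only: sine_mode_def sin_of_real)
  then show ?thesis
    by (simp only: \<omega>_def[symmetric] of_real_add of_real_mult)
qed

lemma w_o_mult_eq_sine_mode:
  "w_o k x * w_o k y = sine_mode (2 * k) x * sine_mode (2 * k) y"
proof -
  have "sine_mode (2 * k) z = (-1) ^ k * w_o k z" for z
  proof -
    have "real (2 * k) * interval_angle z = real k * pi * z + real k * pi"
      by (simp add: interval_angle_def algebra_simps)
    then show ?thesis
      by (simp add: sine_mode_def w_o_def sin_add)
  qed
  then show ?thesis
    by (simp add: algebra_simps flip: power_add power_mult_distrib)
qed

lemma w_e_mult_eq_sine_mode:
  "w_e (Suc k) x * w_e (Suc k) y = sine_mode (2 * k + 1) x * sine_mode (2 * k + 1) y"
proof -
  have "sine_mode (2 * k + 1) z = (-1) ^ k * w_e (Suc k) z" for z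
  proof -
    have "real (2 * k + 1) * interval_angle z = (real (Suc k) - 1/2) * pi * z + (real k * pi + pi / 2)"
      by (simp add: interval_angle_def algebra_simps)
    moreover have "cos (real k * pi + pi / 2) = 0" "sin (real k * pi + pi / 2) = (-1) ^ k"
      by (simp_all add: cos_add sin_add)
    ultimately show ?thesis
      by (simp add: sine_mode_def w_e_def sin_add)
  qed
  then show ?thesis
    by (simp add: algebra_simps flip: power_add power_mult_distrib)
qed

lemma integral_cos_multiple_interval_angle:
  fixes j :: int
  shows "integral {-1..1} (\<lambda>x. cos (of_int j * interval_angle x)) = (if j = 0 then 2 else 0)"
proof (cases "j = 0")
  case False
  define F where "F x = sin (of_int j * interval_angle x) * (2 / (of_int j * pi))" for x
  have "(F has_real_derivative cos (of_int j * interval_angle x)) (at x within {-1..1})" for x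
    unfolding F_def interval_angle_def using False by (auto intro!: derivative_eq_intros simp: field_simps)
  then have "((\<lambda>x. cos (of_int j * interval_angle x)) has_integral F 1 - F (-1)) {-1..1}"
    by (intro fundamental_theorem_of_calculus) (auto simp: has_real_derivative_iff_has_vector_derivative)
  moreover have "F 1 = 0" "F (-1) = 0"
    by (simp_all add: F_def interval_angle_def mult.commute)
  ultimately show ?thesis
    using False by (simp add: integral_unique)
qed simp

lemma integral_sine_mode_mult:
  assumes "n \<ge> 1" "m \<ge> 1"
  shows "integral {-1..1} (\<lambda>x. sine_mode n x * sine_mode m x) = (if n = m then 1 else 0)"
proof -
  define d s where "d = int n - int m" and "s = int n + int m"
  have "sine_mode n x * sine_mode m x
      = 1/2 * cos (of_int d * interval_angle x) - 1/2 * cos (of_int s * interval_angle x)" for x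
    unfolding sine_mode_def sin_times_sin d_def s_def by (simp add: field_simps)
  moreover have "(\<lambda>x. 1/2 * cos (of_int j * interval_angle x)) integrable_on {-1..1}" for j :: int
    by (intro integrable_continuous_real continuous_intros)
  moreover have "d = 0 \<longleftrightarrow> n = m" "s \<noteq> 0"
    using assms by (auto simp: d_def s_def)
  ultimately show ?thesis
    by (simp add: integral_diff integral_cos_multiple_interval_angle)
qed

lemma summable_sine_series:
  assumes "summable (\<lambda>n. \<bar>a n\<bar>)"
  shows "summable (\<lambda>n. a n * sine_mode (Suc n) x)"
  by (rule summable_comparison_test[OF _ assms])
    (use abs_sine_mode_le in \<open>auto simp: abs_mult intro!: mult_left_le\<close>)

lemma continuous_on_sine_series:
  assumes "summable (\<lambda>n. \<bar>a n\<bar>)"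
  shows "continuous_on S (\<lambda>x. \<Sum>n. a n * sine_mode (Suc n) x)"
proof -
  have "uniform_limit S (\<lambda>N x. \<Sum>n<N. a n * sine_mode (Suc n) x) (\<lambda>x. \<Sum>n. a n * sine_mode (Suc n) x)
          sequentially"
    by (rule Weierstrass_m_test[OF _ assms])
      (use abs_sine_mode_le in \<open>auto simp: abs_mult intro!: mult_left_le\<close>)
  then show ?thesis
    by (rule uniform_limit_theorem[rotated]) (auto intro!: always_eventually continuous_intros)
qed

lemma integral_sine_series_mult_sine_mode:
  assumes a: "summable (\<lambda>n. \<bar>a n\<bar>)"
  shows "integral {-1..1} (\<lambda>x. (\<Sum>n. a n * sine_mode (Suc n) x) * sine_mode (Suc m) x) = a m"
proof -
  let ?f = "\<lambda>n x. a n * sine_mode (Suc n) x * sine_mode (Suc m) x"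
  have "\<bar>?f n x\<bar> \<le> \<bar>a n\<bar>" for n x
  proof -
    have "\<bar>sine_mode (Suc n) x\<bar> * \<bar>sine_mode (Suc m) x\<bar> \<le> 1"
      by (intro mult_le_one abs_sine_mode_le abs_ge_zero)
    then show ?thesis
      by (simp add: abs_mult mult.assoc mult_left_le)
  qed
  then have "uniform_limit {-1..1} (\<lambda>N x. \<Sum>n<N. ?f n x) (\<lambda>x. \<Sum>n. ?f n x) sequentially"
    by (intro Weierstrass_m_test[OF _ a]) auto
  then obtain I J where I: "\<And>N. ((\<lambda>x. \<Sum>n<N. ?f n x) has_integral I N) {-1..1}"
    and J: "((\<lambda>x. \<Sum>n. ?f n x) has_integral J) {-1..1}" and lim: "I \<longlonglongrightarrow> J"
    by (rule uniform_limit_integral) (auto intro!: continuous_intros)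
  have "I N = a m" if "N > m" for N
  proof -
    have "I N = (\<Sum>n<N. integral {-1..1} (?f n))"
      using integral_unique[OF I[of N]]
      by (simp add: integral_sum integrable_continuous_real continuous_intros)
    also have "\<dots> = (\<Sum>n<N. if n = m then a m else 0)"
      by (intro sum.cong) (simp_all add: mult.assoc integral_sine_mode_mult)
    finally show ?thesis
      using that by simp
  qed
  then have "I \<longlonglongrightarrow> a m"
    by (intro tendsto_eventually) (auto simp: eventually_sequentially intro!: exI[of _ "Suc m"])
  with lim have "J = a m"
    using LIMSEQ_unique by blast
  moreover have "(\<Sum>n. ?f n x) = (\<Sum>n. a n * sine_mode (Suc n) x) * sine_mode (Suc m) x" for x
    by (rule suminf_mult2[OF summable_sine_series[OF a], symmetric])
  ultimately show ?thesis
    using integral_unique[OF J] by simp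
qed

lemma sine_mode_mult_cos:
  assumes "n \<ge> 1"
  shows "sine_mode n x * cos (interval_angle x) = (sine_mode (Suc n) x + sine_mode (n - 1) x) / 2"
proof -
  have "real n * interval_angle x + interval_angle x = real (Suc n) * interval_angle x"
    "real n * interval_angle x - interval_angle x = real (n - 1) * interval_angle x"
    using assms by (simp_all add: algebra_simps of_nat_diff)
  then show ?thesis
    unfolding sine_mode_def sin_times_cos by simp
qed

lemma orthogonal_sine_modes_imp_orthogonal_cos_powers:
  assumes F: "continuous_on {-1..1} F"
    and orth: "\<And>n. integral {-1..1} (\<lambda>x. F x * sine_mode n x) = 0"
  shows "integral {-1..1} (\<lambda>x. F x * sine_mode n x * cos (interval_angle x) ^ m) = 0"
proof (induction m arbitrary: n)
  case 0
  show ?case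
    using orth by simp
next
  case (Suc m)
  show ?case
  proof (cases "n = 0")
    case False
    have "F x * sine_mode n x * cos (interval_angle x) ^ Suc m
        = F x * cos (interval_angle x) ^ m * (sine_mode n x * cos (interval_angle x))" for x
      by (simp add: algebra_simps)
    also have "\<dots> x = 1/2 * (F x * sine_mode (Suc n) x * cos (interval_angle x) ^ m)
          + 1/2 * (F x * sine_mode (n - 1) x * cos (interval_angle x) ^ m)" for x
      using False by (simp add: sine_mode_mult_cos field_simps)
    finally have recurrence: "F x * sine_mode n x * cos (interval_angle x) ^ Suc m
        = 1/2 * (F x * sine_mode (Suc n) x * cos (interval_angle x) ^ m)
          + 1/2 * (F x * sine_mode (n - 1) x * cos (interval_angle x) ^ m)" for x .
    have "(\<lambda>x. 1/2 * (F x * sine_mode k x * cos (interval_angle x) ^ m)) integrable_on {-1..1}"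
      for k
      by (intro integrable_continuous_real continuous_intros F)
    then show ?thesis
      unfolding recurrence by (simp add: integral_add Suc.IH)
  qed simp
qed

lemma orthogonal_sine_modes_imp_orthogonal_polynomials:
  assumes F: "continuous_on {-1..1} F"
    and orth: "\<And>n. integral {-1..1} (\<lambda>x. F x * sine_mode n x) = 0"
  shows "integral {-1..1} (\<lambda>x. F x * sine_mode 1 x * (\<Sum>i\<le>N. c i * cos (interval_angle x) ^ i)) = 0"
proof -
  have "(\<lambda>x. F x * sine_mode 1 x * (\<Sum>i\<le>N. c i * cos (interval_angle x) ^ i))
      = (\<lambda>x. \<Sum>i\<le>N. c i * (F x * sine_mode 1 x * cos (interval_angle x) ^ i))"
    by (simp add: sum_distrib_left mult_ac)
  then show ?thesis
    by (simp add: integral_sum integrable_continuous_real continuous_intros F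
        orthogonal_sine_modes_imp_orthogonal_cos_powers[OF F orth])
qed

lemma orthogonal_sine_modes_weighted_square_integral_le:
  assumes F: "continuous_on {-1..1} F"
    and orth: "\<And>n. integral {-1..1} (\<lambda>x. F x * sine_mode n x) = 0"
    and "e > 0"
  shows "integral {-1..1} (\<lambda>x. F x ^ 2 * sine_mode 1 x) \<le> e * integral {-1..1} (\<lambda>x. \<bar>F x\<bar>)"
proof -
  (* F as a function of u = cos (interval_angle x); F times sin (interval_angle x) times a
     polynomial in u is orthogonal to F *)
  define g where "g u = F (2 * arccos u / pi - 1)" for u
  have "2 * arccos u / pi - 1 \<in> {-1..1}" if "u \<in> {-1..1}" for u
    using that arccos_lbound[of u] arccos_ubound[of u] pi_gt_zero by (auto simp: field_simps)
  then have "continuous_on {-1..1} g"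
    unfolding g_def by (intro continuous_on_compose2[OF F] continuous_intros) auto
  then obtain P where "real_polynomial_function P" and P: "\<And>u. u \<in> {-1..1} \<Longrightarrow> \<bar>g u - P u\<bar> < e"
    using Stone_Weierstrass_real_polynomial_function[OF compact_Icc _ \<open>e > 0\<close>] by blast
  then obtain c N where P_eq: "P = (\<lambda>u. \<Sum>i\<le>N. c i * u ^ i)"
    by (auto simp: real_polynomial_function_iff_sum)
  have close: "\<bar>F x - P (cos (interval_angle x))\<bar> < e" if "x \<in> {-1..1}" for x
    using P[of "cos (interval_angle x)"] interval_angle_bounds[OF that]
    by (simp add: g_def arccos_cos interval_angle_def)
  have "integral {-1..1} (\<lambda>x. F x ^ 2 * sine_mode 1 x)
      = integral {-1..1} (\<lambda>x. F x * sine_mode 1 x * (F x - P (cos (interval_angle x))))"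
    using orthogonal_sine_modes_imp_orthogonal_polynomials[OF F orth, of c N]
    by (simp add: P_eq algebra_simps power2_eq_square integral_diff
        integrable_continuous_real continuous_intros F)
  also have "\<dots> \<le> integral {-1..1} (\<lambda>x. e * \<bar>F x\<bar>)"
  proof (rule integral_le)
    fix x :: real
    assume x: "x \<in> {-1..1}"
    have "0 \<le> sine_mode 1 x" "sine_mode 1 x \<le> 1"
      using interval_angle_bounds[OF x] by (auto simp: sine_mode_def intro: sin_ge_zero)
    have "F x * sine_mode 1 x * (F x - P (cos (interval_angle x)))
        \<le> \<bar>F x * sine_mode 1 x * (F x - P (cos (interval_angle x)))\<bar>"
      by simp
    also have "\<dots> = \<bar>F x\<bar> * sine_mode 1 x * \<bar>F x - P (cos (interval_angle x))\<bar>"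
      using \<open>0 \<le> sine_mode 1 x\<close> by (simp add: abs_mult)
    also have "\<dots> \<le> \<bar>F x\<bar> * 1 * e"
      using \<open>0 \<le> sine_mode 1 x\<close> \<open>sine_mode 1 x \<le> 1\<close> close[OF x] by (intro mult_mono) auto
    finally show "F x * sine_mode 1 x * (F x - P (cos (interval_angle x))) \<le> e * \<bar>F x\<bar>"
      by (simp add: mult.commute)
  qed (auto simp: P_eq intro!: integrable_continuous_real continuous_intros F)
  finally show ?thesis
    by simp
qed

lemma sine_modes_complete:
  assumes F: "continuous_on {-1..1} F"
    and orth: "\<And>n. integral {-1..1} (\<lambda>x. F x * sine_mode n x) = 0"
    and x: "x \<in> {-1..1}"
  shows "F x = 0"
proof -
  define I where "I = integral {-1..1} (\<lambda>z. F z ^ 2 * sine_mode 1 z)"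
  define M where "M = integral {-1..1} (\<lambda>z. \<bar>F z\<bar>)"
  have sin_nonneg: "0 \<le> sine_mode 1 z" if "z \<in> {-1..1}" for z
    using interval_angle_bounds[OF that] by (simp add: sine_mode_def sin_ge_zero)
  have "M \<ge> 0"
    unfolding M_def by (intro integral_nonneg integrable_continuous_real continuous_intros F) auto
  have "I \<le> 0"
  proof (rule field_le_epsilon)
    fix \<epsilon> :: real
    assume "\<epsilon> > 0"
    with \<open>M \<ge> 0\<close> have "\<epsilon> / (M + 1) > 0"
      by simp
    then have "I \<le> \<epsilon> / (M + 1) * M"
      unfolding I_def M_def by (rule orthogonal_sine_modes_weighted_square_integral_le[OF F orth])
    also have "\<dots> \<le> \<epsilon> / (M + 1) * (M + 1)"
      using \<open>\<epsilon> / (M + 1) > 0\<close> by (intro mult_left_mono) auto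
    also have "\<dots> = \<epsilon>"
      using \<open>M \<ge> 0\<close> by simp
    finally show "I \<le> 0 + \<epsilon>"
      by simp
  qed
  moreover have "I \<ge> 0"
    unfolding I_def using sin_nonneg
    by (intro integral_nonneg integrable_continuous_real continuous_intros F) auto
  ultimately have "I = 0"
    by simp
  then have vanish: "\<forall>z\<in>{-1..1}. F z ^ 2 * sine_mode 1 z = 0"
    unfolding I_def using sin_nonneg
    by (subst (asm) integral_eq_0_iff) (auto intro!: continuous_intros F)
  have "F z = 0" if "z \<in> {-1<..<1}" for z
  proof -
    have "sine_mode 1 z > 0"
      using interval_angle_strict_bounds[of z] that by (simp add: sine_mode_def sin_gt_zero)
    with vanish that show ?thesis
      by auto
  qed
  then show ?thesis
    using continuous_constant_on_closure[of "{-1<..<1}" F 0 x] F x by simp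
qed

section \<open>The symbol and the eigenvalues\<close>

locale green_setting =
  fixes \<Delta> \<nu> R :: real and p :: complex
  assumes \<Delta>_pos: "\<Delta> > 0" and \<nu>_pos: "\<nu> > 0"
    and discriminant_neg: "\<Delta>^2 - 4 * \<Delta> * \<nu> * (1 + \<Delta> * R) < 0"
    and p_square: "p^2 = psq_plus \<Delta> \<nu> R"
begin

lemma Re_p_square: "2 * \<Delta> * \<nu> * Re (p^2) = \<Delta>"
  using \<nu>_pos by (simp add: p_square psq_plus_def)

lemma Im_p_square: "2 * \<Delta> * \<nu> * Im (p^2) = sqrt (4 * \<Delta> * \<nu> * (1 + \<Delta> * R) - \<Delta>^2)"
  using \<Delta>_pos \<nu>_pos by (simp add: p_square psq_plus_def)

lemma Im_p_square_pos: "Im (p^2) > 0"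
proof -
  have "2 * \<Delta> * \<nu> * Im (p^2) > 0"
    using discriminant_neg by (simp add: Im_p_square)
  moreover have "2 * \<Delta> * \<nu> > 0"
    using \<Delta>_pos \<nu>_pos by simp
  ultimately show ?thesis
    by (rule zero_less_mult_pos)
qed

lemma Im_psq_plus_minus_psq_minus: "Im (psq_plus \<Delta> \<nu> R - psq_minus \<Delta> \<nu> R) = 2 * Im (p^2)"
  by (simp add: p_square psq_plus_def psq_minus_def)

lemma norm_p_square: "\<Delta> * \<nu> * ((Re (p^2))^2 + (Im (p^2))^2) = 1 + \<Delta> * R"
proof -
  define a b where "a = Re (p^2)" and "b = Im (p^2)"
  have "(2 * \<Delta> * \<nu>)^2 * (\<Delta> * \<nu> * (a^2 + b^2))
      = \<Delta> * \<nu> * ((2 * \<Delta> * \<nu> * a)^2 + (2 * \<Delta> * \<nu> * b)^2)"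
    by (simp add: power2_eq_square algebra_simps)
  also have "\<dots> = \<Delta> * \<nu> * (\<Delta>^2 + (4 * \<Delta> * \<nu> * (1 + \<Delta> * R) - \<Delta>^2))"
    using discriminant_neg by (simp add: a_def b_def Re_p_square Im_p_square)
  also have "\<dots> = (2 * \<Delta> * \<nu>)^2 * (1 + \<Delta> * R)"
    by (simp add: power2_eq_square)
  finally show ?thesis
    using \<Delta>_pos \<nu>_pos by (simp add: a_def b_def)
qed

lemma characteristic_factor:
  "of_real (1 + \<Delta> * R) - of_real \<Delta> * z + of_real (\<Delta> * \<nu>) * z^2
     = of_real (\<Delta> * \<nu>) * ((z - p^2) * (z - cnj (p^2)))"
proof -
  have "(z - w) * (z - cnj w) = z^2 - (w + cnj w) * z + w * cnj w" for w
    by (simp add: power2_eq_square algebra_simps)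
  then have "of_real (\<Delta> * \<nu>) * ((z - p^2) * (z - cnj (p^2)))
      = of_real (\<Delta> * \<nu>) * (z^2 - of_real (2 * Re (p^2)) * z + of_real ((Re (p^2))^2 + (Im (p^2))^2))"
    by (simp only: complex_add_cnj complex_mult_cnj)
  also have "\<dots> = of_real (\<Delta> * \<nu>) * z^2 - of_real (2 * \<Delta> * \<nu> * Re (p^2)) * z
        + of_real (\<Delta> * \<nu> * ((Re (p^2))^2 + (Im (p^2))^2))"
    by (simp add: algebra_simps)
  finally show ?thesis
    unfolding Re_p_square norm_p_square by (simp add: algebra_simps)
qed

lemma characteristic_root: "of_real (1 + \<Delta> * R) - of_real \<Delta> * p^2 + of_real (\<Delta> * \<nu>) * p^4 = 0"
  using characteristic_factor[of "p^2"] by (simp flip: power_mult)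

definition eigenvalue :: "nat \<Rightarrow> real" where
  "eigenvalue n = 1 + \<Delta> * R - \<Delta> * (real n * pi / 2)^2 + \<Delta> * \<nu> * (real n * pi / 2)^4"

lemma lam_o_eq_eigenvalue: "lam_o \<Delta> \<nu> R (Suc k) = eigenvalue (2 * k + 2)"
proof -
  have \<omega>: "real (2 * k + 2) * pi / 2 = real (Suc k) * pi"
    by simp
  show ?thesis
    unfolding eigenvalue_def \<omega> by (simp add: lam_o_def power_mult_distrib mult_ac)
qed

lemma lam_e_eq_eigenvalue: "lam_e \<Delta> \<nu> R (Suc k) = eigenvalue (2 * k + 1)"
proof -
  have \<omega>: "real (2 * k + 1) * pi / 2 = (real (Suc k) - 1/2) * pi"
    by (simp add: field_simps)
  show ?thesis
    unfolding eigenvalue_def \<omega> by (simp add: lam_e_def power_mult_distrib mult_ac)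
qed

lemma eigenvalue_eq_poly:
  "eigenvalue n = 1 + \<Delta> * R - \<Delta> * (real n * pi / 2)^2 + \<Delta> * \<nu> * ((real n * pi / 2)^2)^2"
  by (simp add: eigenvalue_def flip: power_mult)

lemma eigenvalue_eq_norm:
  "eigenvalue n = \<Delta> * \<nu> * (cmod (p^2 - of_real ((real n * pi / 2)^2)))^2"
proof -
  define z where "z = complex_of_real ((real n * pi / 2)^2)"
  have "complex_of_real (eigenvalue n) = of_real (1 + \<Delta> * R) - of_real \<Delta> * z + of_real (\<Delta> * \<nu>) * z^2"
    unfolding eigenvalue_eq_poly z_def by simp
  also have "\<dots> = of_real (\<Delta> * \<nu>) * ((z - p^2) * cnj (z - p^2))"
    unfolding characteristic_factor by (simp add: z_def)
  also have "\<dots> = of_real (\<Delta> * \<nu>) * of_real ((cmod (z - p^2))^2)"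
    by (simp only: complex_norm_square)
  also have "\<dots> = of_real (\<Delta> * \<nu> * (cmod (p^2 - z))^2)"
    by (simp add: norm_minus_commute)
  finally show ?thesis
    unfolding z_def of_real_eq_iff .
qed

lemma eigenvalue_pos: "eigenvalue n > 0"
proof -
  have "p^2 - of_real ((real n * pi / 2)^2) \<noteq> 0"
    using Im_p_square_pos by (auto simp: complex_eq_iff)
  then show ?thesis
    using \<Delta>_pos \<nu>_pos by (simp add: eigenvalue_eq_norm)
qed

lemma eigenvalue_ge_quartic:
  "(\<Delta> * \<nu> - \<Delta>^2 / (4 * (1 + \<Delta> * R))) * ((real n * pi / 2)^2)^2 \<le> eigenvalue n"
proof -
  define c w where "c = 1 + \<Delta> * R" and "w = (real n * pi / 2)^2"
  have "c > 0"
    using eigenvalue_pos[of 0] by (simp add: eigenvalue_def c_def)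
  have "eigenvalue n - (\<Delta> * \<nu> - \<Delta>^2 / (4 * c)) * w^2 = c - \<Delta> * w + \<Delta>^2 / (4 * c) * w^2"
    by (simp add: eigenvalue_eq_poly c_def w_def algebra_simps)
  also have "\<dots> = (2 * c - \<Delta> * w)^2 / (4 * c)"
    using \<open>c > 0\<close> by (simp add: field_simps power2_eq_square)
  also have "\<dots> \<ge> 0"
    using \<open>c > 0\<close> by simp
  finally show ?thesis
    by (simp add: c_def w_def)
qed

lemma eigenvalue_quadratic_growth: "\<exists>\<epsilon>>0. \<forall>n\<ge>1. \<epsilon> * (real n)^2 \<le> eigenvalue n"
proof (intro exI conjI allI impI)
  define \<epsilon> where "\<epsilon> = \<Delta> * \<nu> - \<Delta>^2 / (4 * (1 + \<Delta> * R))"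
  have "1 + \<Delta> * R > 0"
    using eigenvalue_pos[of 0] by (simp add: eigenvalue_def)
  then show "\<epsilon> > 0"
    using discriminant_neg by (simp add: \<epsilon>_def pos_divide_less_eq mult_ac)
  fix n :: nat
  assume "n \<ge> 1"
  define w where "w = (real n * pi / 2)^2"
  have "real n * 1 \<le> real n * (pi / 2)"
    using pi_gt3 by (intro mult_left_mono) auto
  then have "(real n)^2 \<le> w"
    unfolding w_def by (intro power_mono) (auto simp: mult.assoc)
  moreover have "1 \<le> (real n)^2"
    using \<open>n \<ge> 1\<close> by (intro one_le_power) auto
  ultimately have "(real n)^2 \<le> w^2"
    by (simp add: power2_eq_square order_trans[OF _ mult_left_mono[of 1 w w]])
  then have "\<epsilon> * (real n)^2 \<le> \<epsilon> * w^2"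
    using \<open>\<epsilon> > 0\<close> by (intro mult_left_mono) auto
  also have "\<dots> \<le> eigenvalue n"
    using eigenvalue_ge_quartic[of n] by (simp add: \<epsilon>_def w_def)
  finally show "\<epsilon> * (real n)^2 \<le> eigenvalue n" .
qed

section \<open>The Green's function\<close>

definition sol_left :: "real \<Rightarrow> complex" where
  "sol_left t = sin (p * of_real t + p)"

definition sol_left' :: "real \<Rightarrow> complex" where
  "sol_left' t = p * cos (p * of_real t + p)"

definition sol_right :: "real \<Rightarrow> complex" where
  "sol_right t = sin (- p * of_real t + p)"

definition sol_right' :: "real \<Rightarrow> complex" where
  "sol_right' t = - p * cos (- p * of_real t + p)"

lemma sol_left_has_derivative: "(sol_left has_vector_derivative sol_left' t) (at t within S)"
  unfolding sol_left_def[abs_def] sol_left'_def by (rule has_vector_derivative_sin_affine)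

lemma sol_left'_has_derivative: "(sol_left' has_vector_derivative - (p^2) * sol_left t) (at t within S)"
  unfolding sol_left'_def[abs_def] sol_left_def by (rule has_vector_derivative_cos_affine_scaled)

lemma sol_right_has_derivative: "(sol_right has_vector_derivative sol_right' t) (at t within S)"
  unfolding sol_right_def[abs_def] sol_right'_def by (rule has_vector_derivative_sin_affine)

lemma sol_right'_has_derivative: "(sol_right' has_vector_derivative - (p^2) * sol_right t) (at t within S)"
  using has_vector_derivative_cos_affine_scaled[of "- p" p t S]
  unfolding sol_right'_def[abs_def] sol_right_def by simp

lemma sol_left_minus_one [simp]: "sol_left (-1) = 0"
  by (simp add: sol_left_def)

lemma sol_right_one [simp]: "sol_right 1 = 0"
  by (simp add: sol_right_def)

lemma continuous_on_sol_left [continuous_intros]: "continuous_on S sol_left"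
  unfolding sol_left_def by (intro continuous_intros)

lemma continuous_on_sol_right [continuous_intros]: "continuous_on S sol_right"
  unfolding sol_right_def by (intro continuous_intros)

lemma wronskian: "sol_right' t * sol_left t - sol_left' t * sol_right t = - p * sin (2 * p)"
proof -
  have "sin (2 * p) = sin ((p * of_real t + p) + (- p * of_real t + p))"
    by (simp add: algebra_simps)
  also have "\<dots> = sin (p * of_real t + p) * cos (- p * of_real t + p)
      + cos (p * of_real t + p) * sin (- p * of_real t + p)"
    by (rule sin_add)
  finally show ?thesis
    unfolding sol_left_def sol_left'_def sol_right_def sol_right'_def by (simp add: algebra_simps)
qed

lemma p_nonzero: "p \<noteq> 0"
  using Im_p_square_pos by auto

lemma sin_2p_nonzero: "sin (2 * p) \<noteq> 0"
proof
  assume "sin (2 * p) = 0"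
  then obtain n :: int where "2 * p = of_real (of_int n * pi)"
    by (auto simp: sin_eq_0)
  then have "p = of_real (of_int n * pi / 2)"
    by (simp add: field_simps)
  then have "Im (p^2) = 0"
    by (simp only: of_real_power[symmetric] Im_complex_of_real)
  with Im_p_square_pos show False
    by simp
qed

definition green_const :: complex where
  "green_const = of_real (1 / (\<Delta> * \<nu> * Im (psq_plus \<Delta> \<nu> R - psq_minus \<Delta> \<nu> R)))
                  * 2 / (p * sin (2 * p))"

lemma Green_eq: "Green \<Delta> \<nu> R p x y = Im (green_const * (sol_left (min x y) * sol_right (max x y)))"
proof -
  define K where "K = 1 / (\<Delta> * \<nu> * Im (psq_plus \<Delta> \<nu> R - psq_minus \<Delta> \<nu> R))"
  define X where "X = sol_left (min x y) * sol_right (max x y)"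
  have numerator: "- cos (2 * p - p * of_real \<bar>x - y\<bar>) + cos (p * of_real (x + y)) = 2 * X"
  proof -
    have "cos (p * of_real (min x y + max x y)) - cos (2 * p - p * of_real (max x y - min x y))
        = 2 * sin (p * of_real (min x y) + p) * sin (- p * of_real (max x y) + p)"
      unfolding cos_diff_cos by (simp add: algebra_simps add_divide_distrib diff_divide_distrib)
    moreover have "min x y + max x y = x + y" "max x y - min x y = \<bar>x - y\<bar>"
      by (auto simp: min_def max_def)
    ultimately show ?thesis
      by (simp add: X_def sol_left_def sol_right_def)
  qed
  have "Green \<Delta> \<nu> R p x y = K * Im (2 * X / (p * sin (2 * p)))"
    unfolding Green_def numerator K_def ..
  also have "\<dots> = Im (of_real K * (2 * X / (p * sin (2 * p))))"
    by (simp only: scaleR_conv_of_real[symmetric] scaleR_complex.sel)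
  also have "of_real K * (2 * X / (p * sin (2 * p))) = green_const * X"
    by (simp add: green_const_def K_def divide_inverse mult_ac)
  finally show ?thesis
    unfolding X_def .
qed

lemma Green_sym: "Green \<Delta> \<nu> R p x y = Green \<Delta> \<nu> R p y x"
  by (simp add: Green_eq min.commute max.commute)

lemma continuous_on_Green_first [continuous_intros]: "continuous_on S (\<lambda>x. Green \<Delta> \<nu> R p x y)"
  unfolding Green_eq sol_left_def sol_right_def by (intro continuous_intros)

lemma continuous_on_Green_second [continuous_intros]: "continuous_on S (\<lambda>y. Green \<Delta> \<nu> R p x y)"
  unfolding Green_eq sol_left_def sol_right_def by (intro continuous_intros)

lemma green_const_mult_wronskian:
  "green_const * (- p * sin (2 * p)) = - of_real (1 / (\<Delta> * \<nu> * Im (p^2)))"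
  using p_nonzero sin_2p_nonzero unfolding green_const_def Im_psq_plus_minus_psq_minus by simp

definition particular_solution :: "(real \<Rightarrow> real) \<Rightarrow> real \<Rightarrow> complex" where
  "particular_solution r x =
     sol_right x * integral {-1..x} (\<lambda>y. sol_left y * of_real (r y))
     + sol_left x * integral {x..1} (\<lambda>y. sol_right y * of_real (r y))"

definition particular_solution' :: "(real \<Rightarrow> real) \<Rightarrow> real \<Rightarrow> complex" where
  "particular_solution' r x =
     sol_right' x * integral {-1..x} (\<lambda>y. sol_left y * of_real (r y))
     + sol_left' x * integral {x..1} (\<lambda>y. sol_right y * of_real (r y))"

lemma particular_solution_boundary [simp]:
  "particular_solution r (-1) = 0" "particular_solution r 1 = 0"
  by (simp_all add: particular_solution_def)

lemma particular_solution_has_derivatives: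
  assumes r: "continuous_on {-1..1} r" and x: "x \<in> {-1..1}"
  shows "(particular_solution r has_vector_derivative particular_solution' r x) (at x within {-1..1})"
    and "(particular_solution' r has_vector_derivative
            - (p^2) * particular_solution r x + (- p * sin (2 * p)) * of_real (r x)) (at x within {-1..1})"
proof -
  have f: "continuous_on {-1..1} (\<lambda>y. complex_of_real (r y))"
    by (intro continuous_intros r)
  note vp = variation_of_parameters[OF sol_right_has_derivative sol_right'_has_derivative
      sol_left_has_derivative sol_left'_has_derivative f x]
  show "(particular_solution r has_vector_derivative particular_solution' r x) (at x within {-1..1})"
    using vp(1) unfolding particular_solution_def[abs_def] particular_solution'_def .
  show "(particular_solution' r has_vector_derivative
            - (p^2) * particular_solution r x + (- p * sin (2 * p)) * of_real (r x)) (at x within {-1..1})"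
    using vp(2) unfolding particular_solution_def particular_solution'_def[abs_def] wronskian .
qed

lemma integral_Green_mult:
  assumes r: "continuous_on {-1..1} r" and x: "x \<in> {-1..1}"
  shows "integral {-1..1} (\<lambda>y. Green \<Delta> \<nu> R p x y * r y) = Im (green_const * particular_solution r x)"
proof -
  let ?g = "\<lambda>y. Green \<Delta> \<nu> R p x y * r y"
  have "?g integrable_on {-1..1}"
    by (intro integrable_continuous_real continuous_intros r)
  then have split: "integral {-1..1} ?g = integral {-1..x} ?g + integral {x..1} ?g"
    using x by (intro Henstock_Kurzweil_Integration.integral_combine[symmetric]) auto
  have left: "integral {-1..x} ?g = Im (green_const * sol_right x * integral {-1..x} (\<lambda>y. sol_left y * of_real (r y)))"
  proof -
    have "?g y = Im (green_const * sol_right x * (sol_left y * of_real (r y)))" if "y \<in> {-1..x}" for y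
    proof -
      have "min x y = y" "max x y = x"
        using that by auto
      moreover have "green_const * sol_right x * (sol_left y * of_real (r y))
          = green_const * (sol_left y * sol_right x) * of_real (r y)"
        using calculation by (simp add: mult_ac)
      ultimately show ?thesis
        by (simp only: Green_eq Im_mult_of_real)
    qed
    then have "integral {-1..x} ?g
        = integral {-1..x} (\<lambda>y. Im (green_const * sol_right x * (sol_left y * of_real (r y))))"
      by (rule integral_cong)
    also have "\<dots> = Im (green_const * sol_right x * integral {-1..x} (\<lambda>y. sol_left y * of_real (r y)))"
      using x by (intro integral_Im_mult integrable_continuous_real continuous_intros
          continuous_on_subset[OF r]) auto
    finally show ?thesis .
  qed
  have right: "integral {x..1} ?g = Im (green_const * sol_left x * integral {x..1} (\<lambda>y. sol_right y * of_real (r y)))"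
  proof -
    have "?g y = Im (green_const * sol_left x * (sol_right y * of_real (r y)))" if "y \<in> {x..1}" for y
    proof -
      have "min x y = x" "max x y = y"
        using that by auto
      moreover have "green_const * sol_left x * (sol_right y * of_real (r y))
          = green_const * (sol_left x * sol_right y) * of_real (r y)"
        using calculation by (simp add: mult_ac)
      ultimately show ?thesis
        by (simp only: Green_eq Im_mult_of_real)
    qed
    then have "integral {x..1} ?g
        = integral {x..1} (\<lambda>y. Im (green_const * sol_left x * (sol_right y * of_real (r y))))"
      by (rule integral_cong)
    also have "\<dots> = Im (green_const * sol_left x * integral {x..1} (\<lambda>y. sol_right y * of_real (r y)))"
      using x by (intro integral_Im_mult integrable_continuous_real continuous_intros
          continuous_on_subset[OF r]) auto
    finally show ?thesis .
  qed
  show ?thesis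
    unfolding split left right particular_solution_def by (simp add: algebra_simps)
qed

lemma Green_solves_boundary_value_problem:
  assumes r: "continuous_on {-1..1} r"
  shows "let v = (\<lambda>x. integral {-1..1} (\<lambda>y. Green \<Delta> \<nu> R p x y * r y)) in
           \<exists>v1 v2 v3 v4 :: real \<Rightarrow> real.
             (\<forall>x \<in> {-1..1}.
                (v has_real_derivative v1 x) (at x within {-1..1}) \<and>
                (v1 has_real_derivative v2 x) (at x within {-1..1}) \<and>
                (v2 has_real_derivative v3 x) (at x within {-1..1}) \<and>
                (v3 has_real_derivative v4 x) (at x within {-1..1}) \<and>
                (1 + \<Delta> * R) * v x + \<Delta> * v2 x + \<Delta> * \<nu> * v4 x = r x) \<and>
             continuous_on {-1..1} v4 \<and>
             v (-1) = 0 \<and> v 1 = 0 \<and> v2 (-1) = 0 \<and> v2 1 = 0"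
proof -
  define P P' where "P = particular_solution r" and "P' = particular_solution' r"
  define \<gamma> where "\<gamma> = green_const * (- p * sin (2 * p))"
  define v where "v x = integral {-1..1} (\<lambda>y. Green \<Delta> \<nu> R p x y * r y)" for x
  define v1 v2 v3 v4 where "v1 x = Im (green_const * P' x)" and "v2 x = Im (- (p^2) * green_const * P x)"
    and "v3 x = Im (- (p^2) * green_const * P' x)"
    and "v4 x = Im (p^4 * green_const * P x) + r x / (\<Delta> * \<nu>)" for x
  have v_eq: "v x = Im (green_const * P x)" if "x \<in> {-1..1}" for x
    unfolding v_def P_def using integral_Green_mult[OF r that] .
  (* \<gamma> is real: the source term drops out of v1 and enters v4 through Im (p^2) *)
  have \<gamma>_eq: "\<gamma> = - of_real (1 / (\<Delta> * \<nu> * Im (p^2)))"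
    unfolding \<gamma>_def by (rule green_const_mult_wronskian)
  have P: "(P has_vector_derivative P' x) (at x within {-1..1})"
    and P': "(P' has_vector_derivative - (p^2) * P x + (- p * sin (2 * p)) * of_real (r x))
               (at x within {-1..1})" if "x \<in> {-1..1}" for x
    unfolding P_def P'_def using particular_solution_has_derivatives[OF r that] by auto
  have "(v has_real_derivative v1 x) (at x within {-1..1})" if x: "x \<in> {-1..1}" for x
  proof (rule has_field_derivative_transform_within[OF _ zero_less_one x])
    show "((\<lambda>x. Im (green_const * P x)) has_real_derivative v1 x) (at x within {-1..1})"
      unfolding v1_def by (rule has_real_derivative_Im_mult[OF P[OF x]])
  qed (simp add: v_eq)
  moreover have "(v1 has_real_derivative v2 x) (at x within {-1..1})" if "x \<in> {-1..1}" for x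
  proof -
    have "green_const * (- (p^2) * P x + (- p * sin (2 * p)) * of_real (r x))
        = - (p^2) * green_const * P x + \<gamma> * of_real (r x)"
      by (simp add: \<gamma>_def algebra_simps)
    then have "Im (green_const * (- (p^2) * P x + (- p * sin (2 * p)) * of_real (r x))) = v2 x"
      by (simp add: v2_def \<gamma>_eq)
    then show ?thesis
      using has_real_derivative_Im_mult[OF P'[OF that], of green_const] unfolding v1_def[abs_def]
      by simp
  qed
  moreover have "(v2 has_real_derivative v3 x) (at x within {-1..1})" if "x \<in> {-1..1}" for x
    unfolding v2_def[abs_def] v3_def by (rule has_real_derivative_Im_mult[OF P[OF that]])
  moreover have "(v3 has_real_derivative v4 x) (at x within {-1..1})" if "x \<in> {-1..1}" for x
  proof -
    have "- (p^2) * green_const * (- (p^2) * P x + (- p * sin (2 * p)) * of_real (r x))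
        = p^4 * green_const * P x - p^2 * \<gamma> * of_real (r x)"
      by (simp add: \<gamma>_def algebra_simps power4_eq_xxxx power2_eq_square)
    then have "Im (- (p^2) * green_const * (- (p^2) * P x + (- p * sin (2 * p)) * of_real (r x))) = v4 x"
      using Im_p_square_pos by (simp add: v4_def \<gamma>_eq)
    then show ?thesis
      using has_real_derivative_Im_mult[OF P'[OF that], of "- (p^2) * green_const"]
      unfolding v3_def[abs_def] by simp
  qed
  moreover have "(1 + \<Delta> * R) * v x + \<Delta> * v2 x + \<Delta> * \<nu> * v4 x = r x" if "x \<in> {-1..1}" for x
  proof -
    have "(1 + \<Delta> * R) * v x + \<Delta> * v2 x + \<Delta> * \<nu> * v4 x
        = Im ((of_real (1 + \<Delta> * R) - of_real \<Delta> * p^2 + of_real (\<Delta> * \<nu>) * p^4) * (green_const * P x)) + r x"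
      using \<Delta>_pos \<nu>_pos by (simp add: v_eq[OF that] v2_def v4_def algebra_simps)
    then show ?thesis
      unfolding characteristic_root by simp
  qed
  moreover have "continuous_on {-1..1} v4"
  proof -
    have "continuous_on {-1..1} P"
      using P by (intro continuous_on_vector_derivative) auto
    then show ?thesis
      unfolding v4_def[abs_def] using \<Delta>_pos \<nu>_pos by (intro continuous_intros r) auto
  qed
  moreover have "v (-1) = 0" "v 1 = 0" "v2 (-1) = 0" "v2 1 = 0"
    by (simp_all add: v_eq v2_def P_def)
  ultimately show ?thesis
    unfolding Let_def v_def[symmetric] by blast
qed

section \<open>Eigenfunction expansion\<close>

lemma particular_solution_sine_mode:
  assumes y: "y \<in> {-1..1}"
  shows "particular_solution (sine_mode n) y
           = (- p * sin (2 * p)) * of_real (sine_mode n y) / (p^2 - of_real ((real n * pi / 2)^2))"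
proof -
  define \<omega> where "\<omega> = complex_of_real (real n * pi / 2)"
  define s s' where "s t = sin (\<omega> * of_real t + \<omega>)" and "s' t = \<omega> * cos (\<omega> * of_real t + \<omega>)" for t
  have s_eq: "complex_of_real (sine_mode n t) = s t" for t
    unfolding s_def \<omega>_def by (rule sine_mode_as_complex_sine)
  have s: "(s has_vector_derivative s' t) (at t)" for t
    unfolding s_def[abs_def] s'_def by (rule has_vector_derivative_sin_affine)
  have s': "(s' has_vector_derivative - (\<omega>^2) * s t) (at t)" for t
    unfolding s'_def[abs_def] s_def by (rule has_vector_derivative_cos_affine_scaled)
  have "s (-1) = 0" "s 1 = 0"
    using s_eq[of "-1"] s_eq[of 1] by simp_all
  have "p^2 \<noteq> \<omega>^2"
    using Im_p_square_pos by (auto simp: \<omega>_def simp flip: of_real_power)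
  have "((\<lambda>t. sol_left t * s t) has_integral
      ((sol_left y * s' y - sol_left' y * s y) - (sol_left (-1) * s' (-1) - sol_left' (-1) * s (-1)))
        / (p^2 - \<omega>^2)) {-1..y}"
    using y by (intro Lagrange_identity_has_integral sol_left_has_derivative sol_left'_has_derivative s s'
        \<open>p^2 \<noteq> \<omega>^2\<close>) auto
  then have A: "integral {-1..y} (\<lambda>t. sol_left t * s t)
      = (sol_left y * s' y - sol_left' y * s y) / (p^2 - \<omega>^2)"
    using \<open>s (-1) = 0\<close> by (simp add: integral_unique)
  have "((\<lambda>t. sol_right t * s t) has_integral
      ((sol_right 1 * s' 1 - sol_right' 1 * s 1) - (sol_right y * s' y - sol_right' y * s y))
        / (p^2 - \<omega>^2)) {y..1}"
    using y by (intro Lagrange_identity_has_integral sol_right_has_derivative sol_right'_has_derivative s s'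
        \<open>p^2 \<noteq> \<omega>^2\<close>) auto
  then have B: "integral {y..1} (\<lambda>t. sol_right t * s t)
      = (sol_right' y * s y - sol_right y * s' y) / (p^2 - \<omega>^2)"
    using \<open>s 1 = 0\<close> by (simp add: integral_unique)
  have "particular_solution (sine_mode n) y
      = (sol_right y * (sol_left y * s' y - sol_left' y * s y)
         + sol_left y * (sol_right' y * s y - sol_right y * s' y)) / (p^2 - \<omega>^2)"
    unfolding particular_solution_def s_eq A B by (simp add: add_divide_distrib)
  also have "\<dots> = (sol_right' y * sol_left y - sol_left' y * sol_right y) * s y / (p^2 - \<omega>^2)"
    by (simp add: algebra_simps)
  finally show ?thesis
    unfolding wronskian s_eq[symmetric] \<omega>_def by simp
qed

lemma integral_Green_mult_sine_mode:
  assumes y: "y \<in> {-1..1}"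
  shows "integral {-1..1} (\<lambda>x. Green \<Delta> \<nu> R p x y * sine_mode n x) = sine_mode n y / eigenvalue n"
proof -
  define z where "z = p^2 - of_real ((real n * pi / 2)^2)"
  have "Im z = Im (p^2)"
    by (simp add: z_def)
  have "integral {-1..1} (\<lambda>x. Green \<Delta> \<nu> R p x y * sine_mode n x)
      = integral {-1..1} (\<lambda>x. Green \<Delta> \<nu> R p y x * sine_mode n x)"
    by (simp only: Green_sym[of _ y])
  also have "\<dots> = Im (green_const * (- p * sin (2 * p)) * of_real (sine_mode n y) / z)"
    unfolding integral_Green_mult[OF continuous_on_sine_mode y] particular_solution_sine_mode[OF y] z_def
    by (simp add: mult.assoc)
  also have "\<dots> = Im (- of_real (sine_mode n y / (\<Delta> * \<nu> * Im (p^2))) / z)"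
    unfolding green_const_mult_wronskian by simp
  also have "\<dots> = sine_mode n y / (\<Delta> * \<nu> * Im (p^2)) * Im z / (cmod z)^2"
    by (simp add: Im_divide' del: of_real_divide)
  also have "\<dots> = sine_mode n y / (\<Delta> * \<nu> * (cmod z)^2)"
    using Im_p_square_pos \<open>Im z = Im (p^2)\<close> by simp
  also have "\<dots> = sine_mode n y / eigenvalue n"
    by (simp add: eigenvalue_eq_norm z_def)
  finally show ?thesis .
qed

lemma summable_sine_coefficients:
  "summable (\<lambda>k. \<bar>sine_mode (Suc k) y / eigenvalue (Suc k)\<bar>)"
proof -
  obtain \<epsilon> where "\<epsilon> > 0" and growth: "\<And>n. n \<ge> 1 \<Longrightarrow> \<epsilon> * (real n)^2 \<le> eigenvalue n"
    using eigenvalue_quadratic_growth by blast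
  have bound: "\<bar>sine_mode (Suc k) y / eigenvalue (Suc k)\<bar> \<le> inverse \<epsilon> * inverse (real (Suc k) ^ 2)" for k
  proof -
    have "\<bar>sine_mode (Suc k) y / eigenvalue (Suc k)\<bar> \<le> 1 / eigenvalue (Suc k)"
      using abs_sine_mode_le[of "Suc k" y] eigenvalue_pos[of "Suc k"]
      by (simp add: abs_divide divide_right_mono)
    also have "\<dots> \<le> 1 / (\<epsilon> * (real (Suc k))^2)"
      using \<open>\<epsilon> > 0\<close> growth[of "Suc k"] eigenvalue_pos[of "Suc k"] by (intro divide_left_mono) auto
    finally show ?thesis
      by (simp add: field_simps)
  qed
  have "summable (\<lambda>k. inverse (real k ^ 2))"
    by (rule inverse_power_summable) simp
  then have "summable (\<lambda>k. inverse \<epsilon> * inverse (real (Suc k) ^ 2))"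
    by (intro summable_mult) (subst summable_Suc_iff)
  then show ?thesis
    by (rule summable_comparison_test[rotated]) (use bound in auto)
qed

lemma Green_sine_series:
  assumes x: "x \<in> {-1..1}" and y: "y \<in> {-1..1}"
  shows "(\<lambda>k. sine_mode (Suc k) y / eigenvalue (Suc k) * sine_mode (Suc k) x) sums Green \<Delta> \<nu> R p x y"
proof -
  define a where "a k = sine_mode (Suc k) y / eigenvalue (Suc k)" for k
  have a: "summable (\<lambda>k. \<bar>a k\<bar>)"
    unfolding a_def by (rule summable_sine_coefficients)
  define F where "F x = Green \<Delta> \<nu> R p x y - (\<Sum>k. a k * sine_mode (Suc k) x)" for x
  have F: "continuous_on {-1..1} F"
    unfolding F_def by (intro continuous_intros continuous_on_sine_series a)
  have "integral {-1..1} (\<lambda>x. F x * sine_mode n x) = 0" for n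
  proof (cases n)
    case (Suc m)
    have "integral {-1..1} (\<lambda>x. F x * sine_mode n x)
        = integral {-1..1} (\<lambda>x. Green \<Delta> \<nu> R p x y * sine_mode n x)
          - integral {-1..1} (\<lambda>x. (\<Sum>k. a k * sine_mode (Suc k) x) * sine_mode n x)"
      unfolding F_def left_diff_distrib
      by (intro integral_diff integrable_continuous_real continuous_intros continuous_on_sine_series a)
    then show ?thesis
      unfolding Suc integral_Green_mult_sine_mode[OF y] integral_sine_series_mult_sine_mode[OF a]
      by (simp add: a_def)
  qed simp
  then have "F x = 0"
    by (rule sine_modes_complete[OF F _ x])
  then show ?thesis
    using summable_sine_series[OF a, of x] unfolding F_def a_def by (simp add: summable_sums)
qed

lemma sum_eigenmode_pair:
  "(\<Sum>i\<in>{k * 2..<k * 2 + 2}. sine_mode (Suc i) y / eigenvalue (Suc i) * sine_mode (Suc i) x)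
     = w_o (Suc k) x * w_o (Suc k) y / lam_o \<Delta> \<nu> R (Suc k)
       + w_e (Suc k) x * w_e (Suc k) y / lam_e \<Delta> \<nu> R (Suc k)"
proof -
  have "{k * 2..<k * 2 + 2} = {2 * k + 1 - 1, 2 * k + 2 - 1}"
    by auto
  then show ?thesis
    by (simp add: w_o_mult_eq_sine_mode w_e_mult_eq_sine_mode lam_o_eq_eigenvalue lam_e_eq_eigenvalue
        algebra_simps)
qed

end

theorem mainTheorem2:
  fixes \<Delta> \<nu> R :: real and p :: complex
  assumes hD: "\<Delta> > 0" and hnu: "\<nu> > 0"
    and hdisc: "\<Delta>^2 - 4 * \<Delta> * \<nu> * (1 + \<Delta> * R) < 0"
    and hp: "p^2 = psq_plus \<Delta> \<nu> R"
  shows "(\<forall>x \<in> {-1..1}. \<forall>y \<in> {-1..1}.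
           (\<lambda>k. w_o (Suc k) x * w_o (Suc k) y / lam_o \<Delta> \<nu> R (Suc k)
              + w_e (Suc k) x * w_e (Suc k) y / lam_e \<Delta> \<nu> R (Suc k))
           sums Green \<Delta> \<nu> R p x y)
       \<and> (\<forall>r :: real \<Rightarrow> real. continuous_on {-1..1} r \<longrightarrow>
           (let v = (\<lambda>x. integral {-1..1} (\<lambda>y. Green \<Delta> \<nu> R p x y * r y)) in
            \<exists>v1 v2 v3 v4 :: real \<Rightarrow> real.
              (\<forall>x \<in> {-1..1}.
                 (v has_real_derivative v1 x) (at x within {-1..1}) \<and>
                 (v1 has_real_derivative v2 x) (at x within {-1..1}) \<and>
                 (v2 has_real_derivative v3 x) (at x within {-1..1}) \<and>
                 (v3 has_real_derivative v4 x) (at x within {-1..1}) \<and>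
                 (1 + \<Delta> * R) * v x + \<Delta> * v2 x + \<Delta> * \<nu> * v4 x = r x) \<and>
              continuous_on {-1..1} v4 \<and>
              v (-1) = 0 \<and> v 1 = 0 \<and> v2 (-1) = 0 \<and> v2 1 = 0))"
proof -
  interpret green_setting \<Delta> \<nu> R p
    using assms by unfold_locales
  have "(\<lambda>k. w_o (Suc k) x * w_o (Suc k) y / lam_o \<Delta> \<nu> R (Suc k)
           + w_e (Suc k) x * w_e (Suc k) y / lam_e \<Delta> \<nu> R (Suc k)) sums Green \<Delta> \<nu> R p x y"
    if "x \<in> {-1..1}" "y \<in> {-1..1}" for x y
    using sums_group[OF Green_sine_series[OF that] pos2] unfolding sum_eigenmode_pair .
  then show ?thesis
    using Green_solves_boundary_value_problem by blast
qed

end
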